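(* Let $G$ be a chordal graph, $X\subsetneq V(G)$ a clique, and $L_1,\dots,L_t$ the evaporation sequence of $G$ with exception set $X$. Let $C=V(G)\setminus X$. If $G\setminus X$ is connected, then $N(C)=N(L_t)\cap X$.
   Context: A vertex is simplicial if its neighborhood is a clique. For a chordal graph $G$ and a clique $X\subseteq V(G)$ (possibly empty), the evaporation sequence of $G$ with exception set $X$ is defined recursively: if $X=V(G)$ it is the empty sequence; otherwise let $L_1$ be the set of simplicial vertices of $G$ that are not in $X$ (this set is always nonempty), and the evaporation sequence is $L_1$ followed by the evaporation sequence of $G-L_1$ with exception set $X$. For $S\subseteq V(G)$, $N(S)$ denotes the set of vertices not in $S$ that are adjacent to some vertex of $S$. *)

theory Defs
  imports Main
begin

text \<open>A finite simple graph is given by a finite vertex set V and a symmetric,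
irreflexive adjacency relation E (only edges between vertices of V matter).\<close>

definition graph :: "'a set \<Rightarrow> ('a \<Rightarrow> 'a \<Rightarrow> bool) \<Rightarrow> bool" where
  "graph V E \<longleftrightarrow> finite V \<and> (\<forall>u v. E u v \<longrightarrow> E v u) \<and> (\<forall>v. \<not> E v v)"

definition clique :: "('a \<Rightarrow> 'a \<Rightarrow> bool) \<Rightarrow> 'a set \<Rightarrow> bool" where
  "clique E K \<longleftrightarrow> (\<forall>u\<in>K. \<forall>v\<in>K. u \<noteq> v \<longrightarrow> E u v)"

definition is_cycle :: "'a set \<Rightarrow> ('a \<Rightarrow> 'a \<Rightarrow> bool) \<Rightarrow> 'a list \<Rightarrow> bool" where
  "is_cycle V E cs \<longleftrightarrow> distinct cs \<and> set cs \<subseteq> V \<and> length cs \<ge> 3 \<and>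
     (\<forall>i < length cs. E (cs ! i) (cs ! ((i + 1) mod length cs)))"

definition has_chord :: "('a \<Rightarrow> 'a \<Rightarrow> bool) \<Rightarrow> 'a list \<Rightarrow> bool" where
  "has_chord E cs \<longleftrightarrow> (\<exists>i < length cs. \<exists>j < length cs.
     i \<noteq> j \<and> j \<noteq> (i + 1) mod length cs \<and> i \<noteq> (j + 1) mod length cs \<and> E (cs ! i) (cs ! j))"

definition chordal :: "'a set \<Rightarrow> ('a \<Rightarrow> 'a \<Rightarrow> bool) \<Rightarrow> bool" where
  "chordal V E \<longleftrightarrow> (\<forall>cs. is_cycle V E cs \<and> length cs \<ge> 4 \<longrightarrow> has_chord E cs)"

definition simplicial :: "'a set \<Rightarrow> ('a \<Rightarrow> 'a \<Rightarrow> bool) \<Rightarrow> 'a \<Rightarrow> bool" where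
  "simplicial V E v \<longleftrightarrow> v \<in> V \<and> clique E {u \<in> V. E v u}"

definition nbhd :: "'a set \<Rightarrow> ('a \<Rightarrow> 'a \<Rightarrow> bool) \<Rightarrow> 'a set \<Rightarrow> 'a set" where
  "nbhd V E S = {v \<in> V - S. \<exists>u\<in>S. E u v}"

definition connected_on :: "'a set \<Rightarrow> ('a \<Rightarrow> 'a \<Rightarrow> bool) \<Rightarrow> bool" where
  "connected_on W E \<longleftrightarrow> (\<forall>u\<in>W. \<forall>v\<in>W. (\<lambda>x y. x \<in> W \<and> y \<in> W \<and> E x y)\<^sup>*\<^sup>* u v)"

inductive evap :: "'a set \<Rightarrow> ('a \<Rightarrow> 'a \<Rightarrow> bool) \<Rightarrow> 'a set \<Rightarrow> 'a set list \<Rightarrow> bool" where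
  evap_Nil: "X = V \<Longrightarrow> evap V E X []"
| evap_Cons: "X \<noteq> V \<Longrightarrow> L = {v. simplicial V E v \<and> v \<notin> X} \<Longrightarrow> evap (V - L) E X Ls
              \<Longrightarrow> evap V E X (L # Ls)"

end

theory Submission
  imports Defs
begin

text \<open>Removing a set L of simplicial vertices from a connected vertex set H shortcuts every
path: a detour through a vertex of L enters and leaves it through two of its neighbours, which
are adjacent. Hence H - L stays connected, and a vertex of L with a neighbour x also has a
neighbour c in H - L, which is adjacent to x unless x = c. Applied to the evaporation sequence,
every vertex of X with a neighbour in V - X keeps such a neighbour among the vertices that are
not yet evaporated, down to the last layer.\<close>

lemma simplicial_neighbours_adjacent:
  "\<lbrakk>simplicial V E v; E v a; E v b; a \<in> V; b \<in> V; a \<noteq> b\<rbrakk> \<Longrightarrow> E a b"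
  by (auto simp: simplicial_def clique_def)

lemma path_avoiding_simplicial:
  assumes "symp E" and "\<forall>v\<in>L. simplicial V E v" and "H \<subseteq> V"
    and "(\<lambda>x y. x \<in> H \<and> y \<in> H \<and> E x y)\<^sup>*\<^sup>* a w" and "w \<in> H - L"
  shows "(a \<notin> L \<longrightarrow> (\<lambda>x y. x \<in> H - L \<and> y \<in> H - L \<and> E x y)\<^sup>*\<^sup>* a w) \<and>
         (a \<in> L \<longrightarrow> (\<exists>c\<in>H - L. E a c) \<and>
                     (\<forall>c\<in>H - L. E a c \<longrightarrow> (\<lambda>x y. x \<in> H - L \<and> y \<in> H - L \<and> E x y)\<^sup>*\<^sup>* c w))"
  using assms(4)
proof (induction rule: converse_rtranclp_induct)
  case base
  then show ?case using assms(5) by auto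
next
  case (step y z)
  let ?R = "\<lambda>x y. x \<in> H - L \<and> y \<in> H - L \<and> E x y"
  have y: "y \<in> H" and z: "z \<in> H" and yz: "E y z" using step.hyps(1) by auto
  have zy: "E z y" using yz assms(1) by (rule sympD[rotated])
  have adjacent: "E a b" if "u \<in> L" "E u a" "E u b" "a \<in> H" "b \<in> H" "a \<noteq> b" for u a b
    by (rule simplicial_neighbours_adjacent[of V E u]) (use that assms(2,3) in auto)
  show ?case
  proof (cases "z \<in> L")
    case False
    have z_reaches: "?R\<^sup>*\<^sup>* z w" using step.IH False by blast
    have "?R\<^sup>*\<^sup>* c w" if "c \<in> H - L" "E y c" "y \<in> L" for c
    proof (cases "c = z")
      case True
      then show ?thesis using z_reaches by simp
    next
      case False
      then have "E c z" using adjacent[OF \<open>y \<in> L\<close> \<open>E y c\<close> yz] that(1) z by blast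
      then show ?thesis using that(1) z \<open>z \<notin> L\<close> z_reaches
        by (blast intro: converse_rtranclp_into_rtranclp)
    qed
    moreover have "?R\<^sup>*\<^sup>* y w" if "y \<notin> L"
      using that y z yz \<open>z \<notin> L\<close> z_reaches by (blast intro: converse_rtranclp_into_rtranclp)
    ultimately show ?thesis using False z yz by blast
  next
    case True
    obtain c0 where c0: "c0 \<in> H - L" "E z c0" using step.IH True by blast
    have "?R\<^sup>*\<^sup>* y w" if "y \<notin> L"
      using step.IH True zy that y by blast
    moreover have "E y c0" if "y \<in> L"
      using adjacent[OF True zy c0(2) y] c0(1) that by blast
    moreover have "?R\<^sup>*\<^sup>* c w" if "y \<in> L" "c \<in> H - L" "E y c" for c
    proof -
      have "E c z" using adjacent[OF that(1,3) yz] that(2) z True by blast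
      then have "E z c" using assms(1) by (rule sympD[rotated])
      then show ?thesis using step.IH True that(2) by blast
    qed
    ultimately show ?thesis using c0(1) by blast
  qed
qed

lemma connected_on_Diff_simplicial:
  assumes "symp E" and "\<forall>v\<in>L. simplicial V E v" and "H \<subseteq> V" and "connected_on H E"
  shows "connected_on (H - L) E"
  unfolding connected_on_def
proof (intro ballI)
  fix a b assume "a \<in> H - L" "b \<in> H - L"
  with assms show "(\<lambda>x y. x \<in> H - L \<and> y \<in> H - L \<and> E x y)\<^sup>*\<^sup>* a b"
    using path_avoiding_simplicial[of E L V H a b] by (auto simp: connected_on_def)
qed

lemma simplicial_has_neighbour_outside:
  assumes "symp E" and "\<forall>v\<in>L. simplicial V E v" and "H \<subseteq> V" and "connected_on H E"
    and "a \<in> H \<inter> L" and "H - L \<noteq> {}"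
  shows "\<exists>c\<in>H - L. E a c"
proof -
  obtain w where "w \<in> H - L" using assms(6) by blast
  then show ?thesis
    using assms path_avoiding_simplicial[of E L V H a w] by (auto simp: connected_on_def)
qed

lemma evap_eq_Nil_iff: "evap V E X Ls \<Longrightarrow> Ls = [] \<longleftrightarrow> X = V"
  by (induction rule: evap.induct) auto

lemma last_evap_subset: "\<lbrakk>evap V E X Ls; Ls \<noteq> []\<rbrakk> \<Longrightarrow> last Ls \<subseteq> V - X"
  by (induction rule: evap.induct) (auto simp: simplicial_def)

lemma evap_last_adjacent:
  assumes "evap V E X Ls" and "symp E" and "X \<subseteq> V" and "connected_on (V - X) E"
    and "x \<in> X" and "v \<in> V - X" and "E v x"
  shows "\<exists>w\<in>last Ls. E w x"
  using assms
proof (induction arbitrary: v rule: evap.induct)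
  case (evap_Nil X V E)
  then show ?case by simp
next
  case (evap_Cons X V L E Ls)
  have simplicial_L: "\<forall>u\<in>L. simplicial V E u" using evap_Cons.hyps(2) by blast
  show ?case
  proof (cases "Ls = []")
    case True
    then have "V - L = X" using evap_Cons.hyps(3) evap_eq_Nil_iff by blast
    then show ?thesis using True evap_Cons.prems(5,6) by auto
  next
    case False
    then have last_eq: "last (L # Ls) = last Ls" by simp
    have X_remains: "X \<subseteq> V - L" using evap_Cons.hyps(2) evap_Cons.prems(2) by auto
    have "V - L \<noteq> X" using False evap_Cons.hyps(3) evap_eq_Nil_iff by blast
    then have nonempty: "V - X - L \<noteq> {}" using X_remains by blast
    have "connected_on (V - X - L) E"
      using connected_on_Diff_simplicial[OF evap_Cons.prems(1) simplicial_L _ evap_Cons.prems(3)]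
      by blast
    moreover have "V - X - L = V - L - X" by blast
    ultimately have IH: "\<exists>w\<in>last Ls. E w x" if "u \<in> V - L - X" "E u x" for u
      using evap_Cons.IH[OF evap_Cons.prems(1) X_remains _ evap_Cons.prems(4) that] by simp
    show ?thesis
    proof (cases "v \<in> L")
      case False
      then show ?thesis using IH evap_Cons.prems(5,6) last_eq by auto
    next
      case True
      obtain c where c: "c \<in> V - X - L" "E v c"
        using simplicial_has_neighbour_outside[OF evap_Cons.prems(1) simplicial_L _
              evap_Cons.prems(3) _ nonempty] True evap_Cons.prems(5) by blast
      have "E c x"
        using simplicial_neighbours_adjacent[of V E v c x] simplicial_L True c
          evap_Cons.prems(2,4,6) by blast
      then show ?thesis using IH c last_eq by auto
    qed
  qed
qed

theorem lemma5p8: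
  fixes V X :: "'a set" and E :: "'a \<Rightarrow> 'a \<Rightarrow> bool" and Ls :: "'a set list"
  assumes "graph V E" and "chordal V E"
    and "X \<subset> V" and "clique E X"
    and "evap V E X Ls"
    and "connected_on (V - X) E"
  shows "nbhd V E (V - X) = nbhd V E (last Ls) \<inter> X"
proof -
  have "symp E" using assms(1) by (simp add: graph_def symp_def)
  have "Ls \<noteq> []" using evap_eq_Nil_iff assms(3,5) by blast
  then have last_outside: "last Ls \<subseteq> V - X" using last_evap_subset assms(5) by blast
  have "x \<in> nbhd V E (last Ls)" if "x \<in> nbhd V E (V - X)" for x
    using that evap_last_adjacent[OF assms(5) \<open>symp E\<close> _ assms(6)] assms(3) last_outside
    by (fastforce simp: nbhd_def)
  moreover have "nbhd V E (V - X) \<subseteq> X" "nbhd V E (last Ls) \<inter> X \<subseteq> nbhd V E (V - X)"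
    using last_outside by (auto simp: nbhd_def)
  ultimately show ?thesis by blast
qed

end
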